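(* Let $X\in\mathbb{R}^{n\times m}$ with $m>n$ be a full rank matrix. There exists a subset $\mathcal S\subset[m]$ of cardinality $m-1$ such that $X_{\mathcal S}$ is full rank and $$\|X_{\mathcal S}^{\dagger}\|_F^2 \le \frac{m-n+1}{m-n}\,\|X^{\dagger}\|_F^2 .$$
   Context: $[m]=\{1,\dots,m\}$; $X_{\mathcal S}$ is the submatrix of $X$ formed by the columns indexed by $\mathcal S$; $A^{\dagger}$ is the Moore–Penrose pseudo-inverse and $\|\cdot\|_F$ the Frobenius norm. *)

theory Defs
  imports "Jordan_Normal_Form.DL_Rank" "Jordan_Normal_Form.DL_Submatrix"
begin

definition mp_pinv :: "real mat \<Rightarrow> real mat" where
  "mp_pinv A = (THE B. B \<in> carrier_mat (dim_col A) (dim_row A) \<and>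
      A * B * A = A \<and> B * A * B = B \<and>
      transpose_mat (A * B) = A * B \<and> transpose_mat (B * A) = B * A)"

definition frob_norm :: "real mat \<Rightarrow> real" where
  "frob_norm A = sqrt (\<Sum>i<dim_row A. \<Sum>j<dim_col A. (A $$ (i, j))\<^sup>2)"

end

theory Submission
  imports Defs
begin

text \<open>Let \<open>B = X\<^sup>\<dagger>\<close> and let \<open>Q = B X\<close> be the orthogonal projection onto the row space
  of \<open>X\<close>; its diagonal entries \<open>q\<^sub>i\<close> lie in \<open>[0, 1]\<close> and sum to \<open>n\<close>. If \<open>q\<^sub>i < 1\<close>,
  the vector \<open>w = e\<^sub>i - Q e\<^sub>i\<close> lies in the kernels of \<open>X\<close> and \<open>B\<^sup>T\<close> and has \<open>w\<^sub>i = |w|\<^sup>2 = 1 - q\<^sub>i\<close>,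
  so \<open>B - w b\<^sub>i\<^sup>T / w\<^sub>i\<close> (\<open>b\<^sub>i\<close> the \<open>i\<close>-th row of \<open>B\<close>) is a right inverse of \<open>X\<close> with
  vanishing \<open>i\<close>-th row and squared Frobenius norm \<open>|B|\<^sup>2 + |b\<^sub>i|\<^sup>2 / (1 - q\<^sub>i)\<close>. Dropping
  that row yields a right inverse of \<open>X\<^sub>S\<close>, \<open>S = [m] - {i}\<close>, and the pseudo-inverse has the
  least Frobenius norm among all right inverses. Finally, \<open>\<Sum>(1 - q\<^sub>i) = m - n\<close> and
  \<open>\<Sum>|b\<^sub>i|\<^sup>2 = |B|\<^sup>2\<close>, so averaging yields an \<open>i\<close> with \<open>|b\<^sub>i|\<^sup>2 / (1 - q\<^sub>i) \<le> |B|\<^sup>2 / (m - n)\<close>.\<close>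

lemma (in vec_space) rank_eq_dim_iff_col_space_eq:
  assumes A: "A \<in> carrier_mat n k"
  shows "rank A = n \<longleftrightarrow> col_space A = carrier_vec n"
proof
  assume r: "rank A = n"
  have "lin_indpt {}"
    using fin_dim finite_basis_exists subset_li_is_li basis_def by blast
  then obtain U where U: "finite U" "maximal U (\<lambda>T. T \<subseteq> set (cols A) \<and> lin_indpt T)"
    using maximal_exists_superset[of "set (cols A)" "\<lambda>T. T \<subseteq> set (cols A) \<and> lin_indpt T" "{}"]
    by auto
  have U_cols: "U \<subseteq> set (cols A)" "lin_indpt U" using U(2) unfolding maximal_def by auto
  have "basis U"
    using U(1) U_cols cols_dim[of A] A rank_card_indpt[OF A U(2)] r dim_is_n fin_dim
    by (intro dim_li_is_basis) auto
  hence "carrier_vec n \<subseteq> span (set (cols A))"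
    using span_is_monotone[OF U_cols(1)] unfolding basis_def by simp
  moreover have "span (set (cols A)) \<subseteq> carrier_vec n"
    using A cols_dim[of A] span_closed[of "set (cols A)"] by auto
  ultimately show "col_space A = carrier_vec n" unfolding col_space_def by simp
next
  assume "col_space A = carrier_vec n"
  hence "span_vs (set (cols A)) = V" unfolding col_space_def by simp
  thus "rank A = n" unfolding rank_def using dim_is_n by simp
qed

lemma (in vec_space) col_space_eq_iff_right_inverse:
  assumes A: "A \<in> carrier_mat n k"
  shows "col_space A = carrier_vec n \<longleftrightarrow> (\<exists>C \<in> carrier_mat k n. A * C = 1\<^sub>m n)"
proof
  assume "col_space A = carrier_vec n"
  hence "\<forall>j<n. \<exists>x \<in> carrier_vec k. A *\<^sub>v x = unit_vec n j"
    unfolding col_space_eq[OF A] using A by auto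
  then obtain x where x: "\<And>j. j < n \<Longrightarrow> x j \<in> carrier_vec k \<and> A *\<^sub>v x j = unit_vec n j"
    by metis
  define C where "C = mat k n (\<lambda>(i, j). x j $ i)"
  have "col C j = x j" if "j < n" for j
    using that x[OF that] unfolding C_def by (intro eq_vecI) auto
  hence "(A * C) $$ (i, j) = (A *\<^sub>v x j) $ i" if "i < n" "j < n" for i j
    using that A by (simp add: C_def)
  hence "A * C = 1\<^sub>m n"
    using A x by (intro eq_matI) (auto simp: C_def)
  thus "\<exists>C \<in> carrier_mat k n. A * C = 1\<^sub>m n" unfolding C_def by auto
next
  assume "\<exists>C \<in> carrier_mat k n. A * C = 1\<^sub>m n"
  then obtain C where C: "C \<in> carrier_mat k n" and AC: "A * C = 1\<^sub>m n" by blast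
  have "y \<in> col_space A" if y: "y \<in> carrier_vec n" for y
  proof -
    have "A *\<^sub>v (C *\<^sub>v y) = y" using A C y AC by (simp flip: assoc_mult_mat_vec)
    thus ?thesis unfolding col_space_eq[OF A] using A C y by auto
  qed
  thus "col_space A = carrier_vec n" using col_space_eq[OF A] A by auto
qed

lemma (in vec_space) rank_eq_dim_iff_right_inverse:
  "A \<in> carrier_mat n k \<Longrightarrow> rank A = n \<longleftrightarrow> (\<exists>C \<in> carrier_mat k n. A * C = 1\<^sub>m n)"
  by (simp add: rank_eq_dim_iff_col_space_eq col_space_eq_iff_right_inverse)

definition penrose_inverse :: "real mat \<Rightarrow> real mat \<Rightarrow> bool" where
  "penrose_inverse A B \<longleftrightarrow> B \<in> carrier_mat (dim_col A) (dim_row A) \<and>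
      A * B * A = A \<and> B * A * B = B \<and> (A * B)\<^sup>T = A * B \<and> (B * A)\<^sup>T = B * A"

lemma penrose_inverse_unique:
  assumes B: "penrose_inverse A B" and C: "penrose_inverse A C"
  shows "B = C"
proof -
  define n k where "n = dim_row A" and "k = dim_col A"
  have A: "A \<in> carrier_mat n k" and Bc: "B \<in> carrier_mat k n" and Cc: "C \<in> carrier_mat k n"
    using B C unfolding penrose_inverse_def n_def k_def by auto
  note B = B[unfolded penrose_inverse_def] and C = C[unfolded penrose_inverse_def]
  note assoc = assoc_mult_mat mult_carrier_mat A Bc Cc
  have AB: "A * B = A * C"
  proof -
    have "A * B = (A * C * A) * B" using C by simp
    also have "\<dots> = (A * C) * (A * B)" by (metis assoc)
    also have "\<dots> = (A * C)\<^sup>T * (A * B)\<^sup>T" using B C by simp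
    also have "\<dots> = (A * B * (A * C))\<^sup>T" by (metis transpose_mult mult_carrier_mat A Bc Cc)
    also have "A * B * (A * C) = (A * B * A) * C" by (metis assoc)
    finally show ?thesis using B C by simp
  qed
  have BA: "B * A = C * A"
  proof -
    have "B * A = B * (A * C * A)" using C by simp
    also have "\<dots> = (B * A) * (C * A)" by (metis assoc)
    also have "\<dots> = (B * A)\<^sup>T * (C * A)\<^sup>T" using B C by simp
    also have "\<dots> = (C * A * (B * A))\<^sup>T" by (metis transpose_mult mult_carrier_mat A Bc Cc)
    also have "C * A * (B * A) = C * (A * B * A)" by (metis assoc)
    finally show ?thesis using B C by simp
  qed
  have "B = B * A * B" using B by simp
  also have "\<dots> = B * (A * C)" using AB by (metis assoc)
  also have "\<dots> = C * A * C" using BA by (metis assoc)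
  finally show ?thesis using C by simp
qed

lemma mp_pinv_eqI: "penrose_inverse A B \<Longrightarrow> mp_pinv A = B"
  unfolding mp_pinv_def penrose_inverse_def[symmetric]
  by (blast intro: penrose_inverse_unique)

lemma gram_mat_invertible_if_right_inverse:
  fixes A :: "real mat"
  assumes A: "A \<in> carrier_mat n k" and C: "C \<in> carrier_mat k n" and AC: "A * C = 1\<^sub>m n"
  shows "\<exists>H \<in> carrier_mat n n. H * (A * A\<^sup>T) = 1\<^sub>m n \<and> A * A\<^sup>T * H = 1\<^sub>m n"
proof -
  have G: "A * A\<^sup>T \<in> carrier_mat n n" using A by simp
  have "det (A * A\<^sup>T) \<noteq> 0"
  proof
    assume "det (A * A\<^sup>T) = 0"
    then obtain v where v: "v \<in> carrier_vec n" "v \<noteq> 0\<^sub>v n" "A * A\<^sup>T *\<^sub>v v = 0\<^sub>v n"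
      using det_0_iff_vec_prod_zero[OF G] by auto
    define w where "w = A\<^sup>T *\<^sub>v v"
    have w: "w \<in> carrier_vec k" using A v unfolding w_def by simp
    have "w \<bullet>c w = v \<bullet> (A *\<^sub>v w)"
      using transpose_vec_mult_scalar[of A n k w v] A v w unfolding w_def by simp
    also have "\<dots> = 0" using A v unfolding w_def by simp
    finally have "w = 0\<^sub>v k" using conjugate_square_eq_0_vec[OF w] by blast
    moreover have "C\<^sup>T *\<^sub>v w = (A * C)\<^sup>T *\<^sub>v v"
      using A C v unfolding w_def by (simp add: transpose_mult[OF A C])
    hence "C\<^sup>T *\<^sub>v w = v" using AC v by simp
    moreover have "C\<^sup>T *\<^sub>v 0\<^sub>v k = 0\<^sub>v n" using C by (intro eq_vecI) auto
    ultimately show False using v by simp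
  qed
  thus ?thesis
    using det_non_zero_imp_unit[OF G] unfolding Units_def ring_mat_def by auto
qed

lemma mp_pinv_if_right_inverse:
  fixes A :: "real mat"
  assumes A: "A \<in> carrier_mat n k" and C: "C \<in> carrier_mat k n" and AC: "A * C = 1\<^sub>m n"
  shows "penrose_inverse A (mp_pinv A)" and "A * mp_pinv A = 1\<^sub>m n"
proof -
  define G where "G = A * A\<^sup>T"
  obtain H where H: "H \<in> carrier_mat n n" "H * G = 1\<^sub>m n" "G * H = 1\<^sub>m n"
    using gram_mat_invertible_if_right_inverse[OF assms] unfolding G_def by blast
  have G: "G \<in> carrier_mat n n" and GT: "G\<^sup>T = G"
    using A unfolding G_def by (auto simp: transpose_mult[of A n k "A\<^sup>T" n])
  have "H\<^sup>T * G = (G * H)\<^sup>T" using transpose_mult[OF G H(1)] GT by simp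
  hence "H\<^sup>T * G = 1\<^sub>m n" using H by simp
  moreover have "H\<^sup>T = (H\<^sup>T * G) * H" using G H by simp
  ultimately have HT: "H\<^sup>T = H" using H by simp
  define B where "B = A\<^sup>T * H"
  have B: "B \<in> carrier_mat k n" unfolding B_def using A H by auto
  have AB: "A * B = 1\<^sub>m n"
    using assoc_mult_mat[of A n k "A\<^sup>T" n H n] A H unfolding B_def G_def by simp
  have "(B * A)\<^sup>T = A\<^sup>T * (H * A)"
    using transpose_mult[OF B A] transpose_mult[of "A\<^sup>T" k n H n] A H HT unfolding B_def by simp
  also have "\<dots> = B * A"
    using assoc_mult_mat[of "A\<^sup>T" k n H n A k] A H unfolding B_def by simp
  finally have "penrose_inverse A B"
    unfolding penrose_inverse_def using A B AB by simp
  thus "penrose_inverse A (mp_pinv A)" and "A * mp_pinv A = 1\<^sub>m n"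
    using mp_pinv_eqI AB by auto
qed

definition frob_inner :: "real mat \<Rightarrow> real mat \<Rightarrow> real" where
  "frob_inner A B = (\<Sum>i<dim_row A. \<Sum>j<dim_col A. A $$ (i, j) * B $$ (i, j))"

lemma frob_norm_sq: "(frob_norm A)\<^sup>2 = frob_inner A A"
  unfolding frob_norm_def frob_inner_def by (simp add: sum_nonneg power2_eq_square)

lemma frob_norm_nonneg: "0 \<le> frob_norm A"
  unfolding frob_norm_def by (simp add: sum_nonneg)

lemma frob_norm_sq_add:
  assumes "A \<in> carrier_mat r c" and "B \<in> carrier_mat r c"
  shows "(frob_norm (A + B))\<^sup>2 = (frob_norm A)\<^sup>2 + 2 * frob_inner A B + (frob_norm B)\<^sup>2"
  using assms unfolding frob_norm_sq frob_inner_def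
  by (simp add: sum.distrib sum_distrib_left algebra_simps)

lemma frob_inner_mult_left:
  assumes A: "A \<in> carrier_mat k r" and M: "M \<in> carrier_mat r c" and B: "B \<in> carrier_mat k c"
  shows "frob_inner (A * M) B = frob_inner M (A\<^sup>T * B)"
proof -
  have "frob_inner (A * M) B = (\<Sum>i<k. \<Sum>j<c. \<Sum>l<r. A $$ (i, l) * M $$ (l, j) * B $$ (i, j))"
    using A M unfolding frob_inner_def
    by (simp add: scalar_prod_def sum_distrib_right atLeast0LessThan)
  also have "\<dots> = (\<Sum>l<r. \<Sum>j<c. \<Sum>i<k. A $$ (i, l) * M $$ (l, j) * B $$ (i, j))"
    by (simp add: sum.swap[of _ "{..<k}"] sum.swap[of _ "{..<c}" "{..<r}"])
  also have "\<dots> = frob_inner M (A\<^sup>T * B)"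
    using A M B unfolding frob_inner_def
    by (simp add: scalar_prod_def sum_distrib_left atLeast0LessThan mult_ac)
  finally show ?thesis .
qed

text \<open>\<open>P = A\<^sup>T (P\<^sup>T P)\<close> lies in the row space of \<open>A\<close>, so it is orthogonal to \<open>D - P\<close>,
  which \<open>A\<close> annihilates.\<close>

lemma frob_norm_mp_pinv_le:
  fixes A :: "real mat"
  assumes A: "A \<in> carrier_mat n k" and D: "D \<in> carrier_mat k n" and AD: "A * D = 1\<^sub>m n"
  shows "frob_norm (mp_pinv A) \<le> frob_norm D"
proof -
  define P where "P = mp_pinv A"
  have pen: "penrose_inverse A P" and AP: "A * P = 1\<^sub>m n"
    using mp_pinv_if_right_inverse[OF A D AD] unfolding P_def by auto
  have P: "P \<in> carrier_mat k n" using pen A unfolding penrose_inverse_def by simp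
  have DP: "D - P \<in> carrier_mat k n" using P by (rule minus_carrier_mat)
  have "P = (P * A)\<^sup>T * P" using pen unfolding penrose_inverse_def by simp
  also have "\<dots> = A\<^sup>T * (P\<^sup>T * P)" using A P by (simp add: transpose_mult[OF P A])
  finally have "frob_inner P (D - P) = frob_inner (A\<^sup>T * (P\<^sup>T * P)) (D - P)"
    by (rule arg_cong[where f = "\<lambda>X. frob_inner X (D - P)"])
  also have "\<dots> = frob_inner (P\<^sup>T * P) (A * (D - P))"
    using frob_inner_mult_left[of "A\<^sup>T" k n "P\<^sup>T * P" n "D - P"] A P DP by simp
  also have "A * (D - P) = 0\<^sub>m n n" using A P D AD AP by (simp add: mult_minus_distrib_mat)
  finally have "frob_inner P (D - P) = 0" using P unfolding frob_inner_def by simp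
  moreover have "D = P + (D - P)" using P D by (intro eq_matI) auto
  ultimately have "(frob_norm D)\<^sup>2 = (frob_norm P)\<^sup>2 + (frob_norm (D - P))\<^sup>2"
    using frob_norm_sq_add[OF P DP] by simp
  hence "(frob_norm P)\<^sup>2 \<le> (frob_norm D)\<^sup>2" by simp
  thus ?thesis unfolding P_def using frob_norm_nonneg power2_le_imp_le by blast
qed

lemma penrose_inverse_projector:
  assumes "penrose_inverse A B"
  shows "B * A \<in> carrier_mat (dim_col A) (dim_col A)" and "(B * A) * (B * A) = B * A"
    and "(B * A)\<^sup>T = B * A"
proof -
  have A: "A \<in> carrier_mat (dim_row A) (dim_col A)" by auto
  have B: "B \<in> carrier_mat (dim_col A) (dim_row A)"
    using assms unfolding penrose_inverse_def by simp
  show "B * A \<in> carrier_mat (dim_col A) (dim_col A)" using A B by simp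
  have "(B * A) * (B * A) = (B * A * B) * A"
    by (rule assoc_mult_mat[symmetric]) (use A B in auto)
  thus "(B * A) * (B * A) = B * A" using assms unfolding penrose_inverse_def by simp
  show "(B * A)\<^sup>T = B * A" using assms unfolding penrose_inverse_def by simp
qed

lemma symmetric_idempotent_col_sq:
  fixes P :: "real mat"
  assumes P: "P \<in> carrier_mat m m" and PP: "P * P = P" and PT: "P\<^sup>T = P" and i: "i < m"
  shows "col P i \<bullet> col P i = P $$ (i, i)"
proof -
  have "row P i = col P\<^sup>T i" using P i by simp
  hence "col P i = row P i" using PT by simp
  hence "col P i \<bullet> col P i = (P * P) $$ (i, i)" using P i by simp
  thus ?thesis using PP by simp
qed

lemma symmetric_idempotent_diag_le_one:
  fixes P :: "real mat"
  assumes P: "P \<in> carrier_mat m m" and PP: "P * P = P" and PT: "P\<^sup>T = P" and i: "i < m"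
  shows "P $$ (i, i) \<le> 1"
proof -
  have "(P $$ (i, i))\<^sup>2 \<le> (\<Sum>k\<in>{0..<m}. (col P i $ k)\<^sup>2)"
    using member_le_sum[of i "{0..<m}" "\<lambda>k. (col P i $ k)\<^sup>2"] P i by simp
  also have "\<dots> = P $$ (i, i)"
    using symmetric_idempotent_col_sq[OF assms] P unfolding scalar_prod_def
    by (simp add: power2_eq_square)
  finally have "P $$ (i, i) * P $$ (i, i) \<le> P $$ (i, i) * 1" by (simp add: power2_eq_square)
  thus ?thesis by (cases "P $$ (i, i) > 0") (auto simp: mult_le_cancel_left_pos)
qed

lemma symmetric_idempotent_complement_col:
  fixes P :: "real mat"
  assumes P: "P \<in> carrier_mat m m" and PP: "P * P = P" and PT: "P\<^sup>T = P" and i: "i < m"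
  defines "w \<equiv> unit_vec m i - col P i"
  shows "w \<in> carrier_vec m" and "P *\<^sub>v w = 0\<^sub>v m" and "w $ i = 1 - P $$ (i, i)"
    and "w \<bullet> w = w $ i"
proof -
  show w: "w \<in> carrier_vec m" unfolding w_def using P i by simp
  have "P *\<^sub>v unit_vec m i = col P i" using P i by (intro eq_vecI) auto
  hence "P *\<^sub>v w = col P i - P *\<^sub>v col P i"
    unfolding w_def using P i by (simp add: mult_minus_distrib_mat_vec)
  also have "P *\<^sub>v col P i = col P i" using col_mult2[OF P P i] PP by simp
  finally show "P *\<^sub>v w = 0\<^sub>v m" using P i by simp
  show wi: "w $ i = 1 - P $$ (i, i)" unfolding w_def using P i by simp
  have e: "unit_vec m i \<in> carrier_vec m" and c: "col P i \<in> carrier_vec m" using P i by auto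
  have "w \<bullet> w = unit_vec m i \<bullet> w - col P i \<bullet> w"
    unfolding w_def by (rule minus_scalar_prod_distrib[OF e c w[unfolded w_def]])
  also have "col P i \<bullet> w = col P i $ i - col P i \<bullet> col P i"
    unfolding w_def using scalar_prod_minus_distrib[OF c e c] i by simp
  also have "\<dots> = 0" using symmetric_idempotent_col_sq[OF P PP PT i] P i by simp
  finally show "w \<bullet> w = w $ i" using w i by simp
qed

lemma sum_diag_mult_comm:
  fixes A B :: "'a::comm_semiring_0 mat"
  assumes A: "A \<in> carrier_mat n m" and B: "B \<in> carrier_mat m n"
  shows "(\<Sum>i<m. (B * A) $$ (i, i)) = (\<Sum>j<n. (A * B) $$ (j, j))"
proof -
  have "(\<Sum>i<m. (B * A) $$ (i, i)) = (\<Sum>i<m. \<Sum>j<n. B $$ (i, j) * A $$ (j, i))"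
    using A B by (simp add: scalar_prod_def atLeast0LessThan)
  also have "\<dots> = (\<Sum>j<n. \<Sum>i<m. A $$ (j, i) * B $$ (i, j))"
    by (subst sum.swap) (simp add: mult.commute)
  also have "\<dots> = (\<Sum>j<n. (A * B) $$ (j, j))"
    using A B by (simp add: scalar_prod_def atLeast0LessThan)
  finally show ?thesis .
qed

text \<open>Summed over \<open>I\<close>, both sides of the inequality give \<open>(card I - \<Sum>q) \<Sum>\<beta>\<close>.\<close>

lemma exists_index_slack_bound:
  fixes q \<beta> :: "'a \<Rightarrow> real"
  assumes I: "finite I" and q: "\<forall>i\<in>I. q i \<le> 1" and \<beta>: "\<forall>i\<in>I. 0 \<le> \<beta> i"
    and slack: "sum q I < card I"
  shows "\<exists>i\<in>I. q i < 1 \<and> \<beta> i * (card I - sum q I) \<le> (1 - q i) * sum \<beta> I"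
proof (rule ccontr)
  assume "\<not> ?thesis"
  hence less: "(1 - q i) * sum \<beta> I < \<beta> i * (card I - sum q I)" if "i \<in> I" "q i < 1" for i
    using that by force
  have le: "(1 - q i) * sum \<beta> I \<le> \<beta> i * (card I - sum q I)" if "i \<in> I" for i
    using less[OF that] q \<beta> slack that by (cases "q i < 1") (auto simp: not_less)
  obtain i where i: "i \<in> I" "q i < 1"
  proof (rule ccontr)
    assume "\<not> thesis"
    hence "\<forall>i\<in>I. q i = 1" using that q by force
    thus False using slack by simp
  qed
  have "(\<Sum>i\<in>I. (1 - q i) * sum \<beta> I) < (\<Sum>i\<in>I. \<beta> i * (card I - sum q I))"
    using I le less[OF i] i by (intro sum_strict_mono_ex1) auto
  thus False by (simp add: sum_distrib_right[symmetric] sum_subtractf)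
qed

lemma pick_atLeastLessThan: "r < n \<Longrightarrow> pick {0..<n} r = r"
proof (induction r)
  case 0 thus ?case by (simp add: Least_equality)
next
  case (Suc r)
  hence "pick {0..<n} r = r" by simp
  thus ?case using Suc.prems by (simp, intro Least_equality, auto)
qed

lemma pick_atLeastLessThan_remove:
  assumes i: "i < m"
  shows "k < m - 1 \<Longrightarrow> pick ({0..<m} - {i}) k = (if k < i then k else Suc k)"
proof (induction k)
  case 0 thus ?case using i by (cases "i = 0") (simp_all, (intro Least_equality; auto))
next
  case (Suc k)
  hence pick_Suc: "pick ({0..<m} - {i}) (Suc k)
      = (LEAST a. a \<in> {0..<m} - {i} \<and> (if k < i then k else Suc k) < a)"
    by simp
  consider "Suc k < i" | "Suc k = i" | "i \<le> k" by linarith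
  thus ?case
  proof cases
    case 1 thus ?thesis unfolding pick_Suc using Suc.prems i by (intro Least_equality) auto
  next
    case 2 thus ?thesis unfolding pick_Suc using Suc.prems i by (intro Least_equality) auto
  next
    case 3 thus ?thesis unfolding pick_Suc using Suc.prems i by (intro Least_equality) auto
  qed
qed

lemma sum_lessThan_remove_reindex:
  fixes f :: "nat \<Rightarrow> 'a::ab_group_add"
  assumes i: "i < m"
  shows "(\<Sum>k<m - 1. f (if k < i then k else Suc k)) = (\<Sum>l<m. f l) - f i"
proof -
  let ?p = "\<lambda>k. if k < i then k else Suc k"
  have "bij_betw ?p {..<m - 1} ({..<m} - {i})"
  proof (rule bij_betw_imageI)
    show "inj_on ?p {..<m - 1}" by (auto simp: inj_on_def split: if_splits)
    show "?p ` {..<m - 1} = {..<m} - {i}"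
    proof
      show "{..<m} - {i} \<subseteq> ?p ` {..<m - 1}"
      proof
        fix l assume l: "l \<in> {..<m} - {i}"
        show "l \<in> ?p ` {..<m - 1}"
        proof (cases "l < i")
          case True thus ?thesis using l i by (intro image_eqI[of _ _ l]) auto
        next
          case False thus ?thesis using l i by (intro image_eqI[of _ _ "l - 1"]) auto
        qed
      qed
    qed auto
  qed
  hence "(\<Sum>k<m - 1. f (?p k)) = (\<Sum>l\<in>{..<m} - {i}. f l)" by (rule sum.reindex_bij_betw)
  also have "\<dots> = (\<Sum>l<m. f l) - f i" using i by (simp add: sum_diff1)
  finally show ?thesis .
qed

lemma submatrix_remove_col:
  assumes A: "A \<in> carrier_mat p m" and i: "i < m"
  shows "submatrix A {0..<p} ({0..<m} - {i}) \<in> carrier_mat p (m - 1)"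
    and "r < p \<Longrightarrow> k < m - 1 \<Longrightarrow>
      submatrix A {0..<p} ({0..<m} - {i}) $$ (r, k) = A $$ (r, if k < i then k else Suc k)"
proof -
  have "{a. a < dim_row A \<and> a \<in> {0..<p}} = {0..<p}"
    and "{a. a < dim_col A \<and> a \<in> {0..<m} - {i}} = {0..<m} - {i}" using A by auto
  hence cards: "card {a. a < dim_row A \<and> a \<in> {0..<p}} = p"
    "card {a. a < dim_col A \<and> a \<in> {0..<m} - {i}} = m - 1" using i by simp_all
  thus "submatrix A {0..<p} ({0..<m} - {i}) \<in> carrier_mat p (m - 1)"
    using cards by (intro carrier_matI) (simp_all only: dim_submatrix)
  assume r: "r < p" and k: "k < m - 1"
  have "submatrix A {0..<p} ({0..<m} - {i}) $$ (r, k) = A $$ (pick {0..<p} r, pick ({0..<m} - {i}) k)"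
    using cards r k by (intro submatrix_index) simp_all
  thus "submatrix A {0..<p} ({0..<m} - {i}) $$ (r, k) = A $$ (r, if k < i then k else Suc k)"
    using pick_atLeastLessThan[OF r] pick_atLeastLessThan_remove[OF i k] by simp
qed

lemma submatrix_remove_row:
  assumes A: "A \<in> carrier_mat m q" and i: "i < m"
  shows "submatrix A ({0..<m} - {i}) {0..<q} \<in> carrier_mat (m - 1) q"
    and "k < m - 1 \<Longrightarrow> j < q \<Longrightarrow>
      submatrix A ({0..<m} - {i}) {0..<q} $$ (k, j) = A $$ (if k < i then k else Suc k, j)"
proof -
  have "{a. a < dim_row A \<and> a \<in> {0..<m} - {i}} = {0..<m} - {i}"
    and "{a. a < dim_col A \<and> a \<in> {0..<q}} = {0..<q}" using A by auto
  hence cards: "card {a. a < dim_row A \<and> a \<in> {0..<m} - {i}} = m - 1"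
    "card {a. a < dim_col A \<and> a \<in> {0..<q}} = q" using i by simp_all
  thus "submatrix A ({0..<m} - {i}) {0..<q} \<in> carrier_mat (m - 1) q"
    using cards by (intro carrier_matI) (simp_all only: dim_submatrix)
  assume k: "k < m - 1" and j: "j < q"
  have "submatrix A ({0..<m} - {i}) {0..<q} $$ (k, j) = A $$ (pick ({0..<m} - {i}) k, pick {0..<q} j)"
    using cards k j by (intro submatrix_index) simp_all
  thus "submatrix A ({0..<m} - {i}) {0..<q} $$ (k, j) = A $$ (if k < i then k else Suc k, j)"
    using pick_atLeastLessThan[OF j] pick_atLeastLessThan_remove[OF i k] by simp
qed

lemma mult_submatrix_remove_zero_row:
  fixes X D :: "'a::comm_ring mat"
  assumes X: "X \<in> carrier_mat p m" and D: "D \<in> carrier_mat m q" and i: "i < m"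
    and zero: "\<forall>j<q. D $$ (i, j) = 0"
  shows "submatrix X {0..<p} ({0..<m} - {i}) * submatrix D ({0..<m} - {i}) {0..<q} = X * D"
proof (rule eq_matI)
  note XS = submatrix_remove_col[OF X i] and DS = submatrix_remove_row[OF D i]
  fix r j assume "r < dim_row (X * D)" "j < dim_col (X * D)"
  hence r: "r < p" and j: "j < q" using X D by auto
  have "(submatrix X {0..<p} ({0..<m} - {i}) * submatrix D ({0..<m} - {i}) {0..<q}) $$ (r, j)
      = (\<Sum>k<m - 1. (\<lambda>l. X $$ (r, l) * D $$ (l, j)) (if k < i then k else Suc k))"
    using XS DS r j by (simp add: scalar_prod_def atLeast0LessThan)
  also have "\<dots> = (\<Sum>l<m. X $$ (r, l) * D $$ (l, j))"
    using sum_lessThan_remove_reindex[OF i, of "\<lambda>l. X $$ (r, l) * D $$ (l, j)"] zero j by simp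
  also have "\<dots> = (X * D) $$ (r, j)"
    using X D r j by (simp add: scalar_prod_def atLeast0LessThan)
  finally show "(submatrix X {0..<p} ({0..<m} - {i}) * submatrix D ({0..<m} - {i}) {0..<q}) $$ (r, j)
      = (X * D) $$ (r, j)" .
qed (use submatrix_remove_col[OF X i] submatrix_remove_row[OF D i] X D in auto)

lemma frob_norm_submatrix_remove_zero_row:
  assumes D: "D \<in> carrier_mat m q" and i: "i < m" and zero: "\<forall>j<q. D $$ (i, j) = 0"
  shows "frob_norm (submatrix D ({0..<m} - {i}) {0..<q}) = frob_norm D"
proof -
  note DS = submatrix_remove_row[OF D i]
  have "(\<Sum>k<m - 1. \<Sum>j<q. (submatrix D ({0..<m} - {i}) {0..<q} $$ (k, j))\<^sup>2)
      = (\<Sum>k<m - 1. (\<lambda>l. \<Sum>j<q. (D $$ (l, j))\<^sup>2) (if k < i then k else Suc k))"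
    using DS by simp
  also have "\<dots> = (\<Sum>l<m. \<Sum>j<q. (D $$ (l, j))\<^sup>2)"
    using sum_lessThan_remove_reindex[OF i, of "\<lambda>l. \<Sum>j<q. (D $$ (l, j))\<^sup>2"] zero by simp
  finally show ?thesis using DS D unfolding frob_norm_def by simp
qed

text \<open>The correction \<open>-w b\<^sub>i\<^sup>T / w\<^sub>i\<close> is killed by \<open>X\<close> because \<open>X w = 0\<close>, is orthogonal to \<open>B\<close>
  because \<open>B\<^sup>T w = 0\<close>, and cancels the \<open>i\<close>-th row of \<open>B\<close>.\<close>

lemma right_inverse_update_zero_row:
  fixes X B :: "real mat" and w :: "real vec"
  assumes X: "X \<in> carrier_mat n m" and B: "B \<in> carrier_mat m n" and XB: "X * B = 1\<^sub>m n"
    and w: "w \<in> carrier_vec m" and Xw: "X *\<^sub>v w = 0\<^sub>v n" and Bw: "B\<^sup>T *\<^sub>v w = 0\<^sub>v n"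
    and ww: "w \<bullet> w = w $ i" and wi: "w $ i \<noteq> 0" and i: "i < m"
  shows "\<exists>D \<in> carrier_mat m n. X * D = 1\<^sub>m n \<and> (\<forall>j<n. D $$ (i, j) = 0) \<and>
           (frob_norm D)\<^sup>2 = (frob_norm B)\<^sup>2 + (\<Sum>j<n. (B $$ (i, j))\<^sup>2) / w $ i"
proof -
  define c where "c j = - B $$ (i, j) / w $ i" for j
  define W where "W = mat m n (\<lambda>(k, j). c j * w $ k)"
  have W: "W \<in> carrier_mat m n" unfolding W_def by simp
  have col_W: "col W j = c j \<cdot>\<^sub>v w" if "j < n" for j
    using that w unfolding W_def by (intro eq_vecI) auto
  have "X * W = 0\<^sub>m n n"
  proof (rule eq_matI)
    fix r j assume "r < dim_row (0\<^sub>m n n)" "j < dim_col (0\<^sub>m n n)"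
    hence r: "r < n" and j: "j < n" by auto
    have "(X * W) $$ (r, j) = row X r \<bullet> (c j \<cdot>\<^sub>v w)" using X W r j col_W by simp
    also have "\<dots> = c j * (X *\<^sub>v w) $ r" using X w r by simp
    finally show "(X * W) $$ (r, j) = 0\<^sub>m n n $$ (r, j)" using Xw r j by simp
  qed (use X W in auto)
  hence XD: "X * (B + W) = 1\<^sub>m n" using X B W XB by (simp add: mult_add_distrib_mat)
  have row_i: "(B + W) $$ (i, j) = 0" if "j < n" for j
    using that B W i wi unfolding W_def c_def by simp
  have "frob_inner B W = (\<Sum>k<m. \<Sum>j<n. c j * (B $$ (k, j) * w $ k))"
    using B W unfolding frob_inner_def W_def by (simp add: mult_ac)
  also have "\<dots> = (\<Sum>j<n. c j * (\<Sum>k<m. B $$ (k, j) * w $ k))"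
    by (subst sum.swap) (simp add: sum_distrib_left)
  also have "\<dots> = (\<Sum>j<n. c j * (B\<^sup>T *\<^sub>v w) $ j)"
    using B w by (simp add: scalar_prod_def atLeast0LessThan)
  also have "\<dots> = 0" using Bw by simp
  finally have BW: "frob_inner B W = 0" .
  have "(frob_norm W)\<^sup>2 = (\<Sum>k<m. \<Sum>j<n. (c j)\<^sup>2 * (w $ k)\<^sup>2)"
    using W unfolding frob_norm_sq frob_inner_def W_def by (simp add: power2_eq_square mult_ac)
  also have "\<dots> = (\<Sum>j<n. (c j)\<^sup>2 * (w \<bullet> w))"
    using w by (subst sum.swap) (simp add: scalar_prod_def atLeast0LessThan sum_distrib_left power2_eq_square)
  also have "\<dots> = (\<Sum>j<n. (B $$ (i, j))\<^sup>2) / w $ i"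
    using ww wi unfolding c_def by (simp add: sum_divide_distrib power2_eq_square)
  finally have "(frob_norm (B + W))\<^sup>2 = (frob_norm B)\<^sup>2 + (\<Sum>j<n. (B $$ (i, j))\<^sup>2) / w $ i"
    unfolding frob_norm_sq_add[OF B W] BW by simp
  moreover have "B + W \<in> carrier_mat m n" using B W by simp
  ultimately show ?thesis using XD row_i by blast
qed

text \<open>Here \<open>w = e\<^sub>i - Q e\<^sub>i\<close> is the component of \<open>e\<^sub>i\<close> orthogonal to the row space of \<open>X\<close>.\<close>

lemma remove_column_right_inverse:
  fixes X B :: "real mat"
  assumes X: "X \<in> carrier_mat n m" and pen: "penrose_inverse X B" and XB: "X * B = 1\<^sub>m n"
    and i: "i < m" and q: "(B * X) $$ (i, i) < 1"
  shows "\<exists>D \<in> carrier_mat (m - 1) n. submatrix X {0..<n} ({0..<m} - {i}) * D = 1\<^sub>m n \<and>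
           (frob_norm D)\<^sup>2 = (frob_norm B)\<^sup>2 + (\<Sum>j<n. (B $$ (i, j))\<^sup>2) / (1 - (B * X) $$ (i, i))"
proof -
  define Q where "Q = B * X"
  have B: "B \<in> carrier_mat m n" using pen X unfolding penrose_inverse_def by simp
  have Q: "Q \<in> carrier_mat m m" "Q * Q = Q" "Q\<^sup>T = Q"
    using penrose_inverse_projector[OF pen] X unfolding Q_def by auto
  define w where "w = unit_vec m i - col Q i"
  note w = symmetric_idempotent_complement_col[OF Q i, folded w_def]
  have zero: "A *\<^sub>v 0\<^sub>v m = 0\<^sub>v n" if "A \<in> carrier_mat n m" for A :: "real mat"
    using that by (intro eq_vecI) auto
  have "X * Q = X * B * X" unfolding Q_def using X B by simp
  hence "X *\<^sub>v w = (X * Q) *\<^sub>v w" using pen unfolding penrose_inverse_def by simp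
  hence Xw: "X *\<^sub>v w = 0\<^sub>v n" using X Q w zero[OF X] by simp
  have "B\<^sup>T = (Q * B)\<^sup>T" using pen unfolding penrose_inverse_def Q_def by simp
  also have "\<dots> = B\<^sup>T * Q" using transpose_mult[OF Q(1) B] Q by simp
  finally have "B\<^sup>T *\<^sub>v w = (B\<^sup>T * Q) *\<^sub>v w" by simp
  hence Bw: "B\<^sup>T *\<^sub>v w = 0\<^sub>v n" using B Q w zero[of "B\<^sup>T"] by simp
  obtain D where D: "D \<in> carrier_mat m n" "X * D = 1\<^sub>m n" "\<forall>j<n. D $$ (i, j) = 0"
    and norm_D: "(frob_norm D)\<^sup>2 = (frob_norm B)\<^sup>2 + (\<Sum>j<n. (B $$ (i, j))\<^sup>2) / w $ i"
    using right_inverse_update_zero_row[OF X B XB w(1) Xw Bw w(4)] w(3) q i unfolding Q_def by auto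
  show ?thesis
  proof (intro bexI conjI)
    show "submatrix X {0..<n} ({0..<m} - {i}) * submatrix D ({0..<m} - {i}) {0..<n} = 1\<^sub>m n"
      using mult_submatrix_remove_zero_row[OF X D(1) i D(3)] D(2) by simp
    show "(frob_norm (submatrix D ({0..<m} - {i}) {0..<n}))\<^sup>2
        = (frob_norm B)\<^sup>2 + (\<Sum>j<n. (B $$ (i, j))\<^sup>2) / (1 - (B * X) $$ (i, i))"
      using frob_norm_submatrix_remove_zero_row[OF D(1) i D(3)] norm_D w(3) unfolding Q_def by simp
    show "submatrix D ({0..<m} - {i}) {0..<n} \<in> carrier_mat (m - 1) n"
      using submatrix_remove_row(1)[OF D(1) i] .
  qed
qed

lemma exists_cheap_column:
  fixes X B :: "real mat"
  assumes X: "X \<in> carrier_mat n m" and pen: "penrose_inverse X B" and XB: "X * B = 1\<^sub>m n"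
    and mn: "n < m"
  shows "\<exists>i<m. (B * X) $$ (i, i) < 1 \<and>
    (\<Sum>j<n. (B $$ (i, j))\<^sup>2) / (1 - (B * X) $$ (i, i)) \<le> (frob_norm B)\<^sup>2 / (real m - real n)"
proof -
  have B: "B \<in> carrier_mat m n" using pen X unfolding penrose_inverse_def by simp
  define q \<beta> where "q i = (B * X) $$ (i, i)" and "\<beta> i = (\<Sum>j<n. (B $$ (i, j))\<^sup>2)" for i
  have "\<forall>i\<in>{..<m}. q i \<le> 1"
    using symmetric_idempotent_diag_le_one penrose_inverse_projector[OF pen] X unfolding q_def by auto
  moreover have "sum q {..<m} = n" using sum_diag_mult_comm[OF X B] XB unfolding q_def by simp
  moreover have "\<forall>i\<in>{..<m}. 0 \<le> \<beta> i" unfolding \<beta>_def by (simp add: sum_nonneg)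
  ultimately obtain i where i: "i < m" "q i < 1"
    and bound: "\<beta> i * (real m - real n) \<le> (1 - q i) * sum \<beta> {..<m}"
    using exists_index_slack_bound[of "{..<m}" q \<beta>] mn by auto
  have "(frob_norm B)\<^sup>2 = sum \<beta> {..<m}"
    using B unfolding frob_norm_def \<beta>_def by (simp add: sum_nonneg)
  hence "\<beta> i / (1 - q i) \<le> (frob_norm B)\<^sup>2 / (real m - real n)"
    using bound i(2) mn by (simp add: field_simps)
  thus ?thesis using i unfolding q_def \<beta>_def by blast
qed

theorem lemma3p2:
  fixes X :: "real mat" and n m :: nat
  assumes "X \<in> carrier_mat n m"
    and "m > n"
    and "vec_space.rank n X = min n m"
  shows "\<exists>S. S \<subseteq> {0..<m} \<and> card S = m - 1 \<and>
           vec_space.rank n (submatrix X {0..<n} S) = min n (m - 1) \<and>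
           (frob_norm (mp_pinv (submatrix X {0..<n} S)))\<^sup>2
             \<le> (real m - real n + 1) / (real m - real n) * (frob_norm (mp_pinv X))\<^sup>2"
proof -
  note X = assms(1)
  obtain C where C: "C \<in> carrier_mat m n" "X * C = 1\<^sub>m n"
    using vec_space.rank_eq_dim_iff_right_inverse[OF X] assms(2,3) by auto
  define B where "B = mp_pinv X"
  have pen: "penrose_inverse X B" and XB: "X * B = 1\<^sub>m n"
    using mp_pinv_if_right_inverse[OF X C] unfolding B_def by auto
  obtain i where i: "i < m" "(B * X) $$ (i, i) < 1"
    and cost: "(\<Sum>j<n. (B $$ (i, j))\<^sup>2) / (1 - (B * X) $$ (i, i)) \<le> (frob_norm B)\<^sup>2 / (real m - real n)"
    using exists_cheap_column[OF X pen XB assms(2)] by blast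
  define S where "S = {0..<m} - {i}"
  obtain D where D: "D \<in> carrier_mat (m - 1) n" "submatrix X {0..<n} S * D = 1\<^sub>m n"
    and norm_D: "(frob_norm D)\<^sup>2 \<le> (frob_norm B)\<^sup>2 + (frob_norm B)\<^sup>2 / (real m - real n)"
    using remove_column_right_inverse[OF X pen XB i] cost unfolding S_def by fastforce
  have XS: "submatrix X {0..<n} S \<in> carrier_mat n (m - 1)"
    using submatrix_remove_col(1)[OF X i(1)] unfolding S_def .
  have "vec_space.rank n (submatrix X {0..<n} S) = min n (m - 1)"
    using vec_space.rank_eq_dim_iff_right_inverse[OF XS] D assms(2) by auto
  moreover have "(frob_norm (mp_pinv (submatrix X {0..<n} S)))\<^sup>2 \<le> (frob_norm D)\<^sup>2"
    using frob_norm_mp_pinv_le[OF XS D] frob_norm_nonneg by (simp add: power_mono)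
  moreover have "(frob_norm B)\<^sup>2 + (frob_norm B)\<^sup>2 / (real m - real n)
      = (real m - real n + 1) / (real m - real n) * (frob_norm B)\<^sup>2"
    using assms(2) by (simp add: field_simps)
  moreover have "S \<subseteq> {0..<m}" "card S = m - 1" using i(1) unfolding S_def by auto
  ultimately show ?thesis using norm_D unfolding B_def by (metis order.trans)
qed

end
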